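(* In Algorithm SC (with $|b(v)|\le\deg(v)$ for all $v$ and $\alpha\in(0,1/4]$), for every $i\ge0$ such that rounds $1,\dots,i$ have computed $r^1,\dots,r^i$, we have $\sum_{v\in V}|r^{\le i}_v|\cdot\deg(v)\le i\cdot\|b\|_1$.
   Context: Let $G=(V,E)$ be a unit-capacity undirected graph, $n=|V|\ge3$, every vertex of degree $\deg(v)\ge1$, each edge with a fixed arbitrary orientation; $B\in\mathbb R^{V\times E}$ is the incidence matrix (column $(u,v)$ has $+1$ in row $u$, $-1$ in row $v$, $0$ elsewhere). Algorithm SC takes $b\in\mathbb R^V$ with $|b(v)|\le\deg(v)$ for all $v$, $\alpha\in(0,1/4]$ and an integer $T\ge1$. Set $w^1_{v,+}=w^1_{v,-}=1$ for all $v$. For $i=1,\dots,T$: (1) for $\circ\in\{+,-\}$, $\tilde w^i_{v,\circ}=w^i_{v,\circ}$ if $w^i_{v,\circ}\ge n$ and $\tilde w^i_{v,\circ}=0$ otherwise; (2) $\tilde\phi^i_v=(\tilde w^i_{v,+}-\tilde w^i_{v,-})/\deg(v)$; (3) for each edge $(u,v)$, $f^i(u,v)=+1$ if $\tilde\phi^i_u>\tilde\phi^i_v$, $-1$ if $\tilde\phi^i_u<\tilde\phi^i_v$, $0$ otherwise; (4) if $\langle\tilde\phi^i,b\rangle>\langle\tilde\phi^i,Bf^i\rangle$, terminate; (5) $r^i_v=(b(v)-(Bf^i)_v)/\deg(v)$; (6) $w^{i+1}_{v,+}=w^i_{v,+}(1+\alpha r^i_v)$ and $w^{i+1}_{v,-}=w^i_{v,-}(1-\alpha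 r^i_v)$. Write $r^{\le i}_v=\sum_{i'=1}^{i}r^{i'}_v$, with $r^{\le 0}_v=0$. $\|b\|_1=\sum_v|b(v)|$. *)

theory Defs
  imports Main "HOL-Library.FuncSet" Complex_Main
begin

text \<open>Graph: finite vertex set V, edges E given as oriented pairs (u,v) (the fixed
arbitrary orientation of each undirected edge).\<close>

definition deg :: "('v \<times> 'v) set \<Rightarrow> 'v \<Rightarrow> real" where
  "deg E v = real (card {e \<in> E. fst e = v \<or> snd e = v})"

text \<open>(B f)_v for the incidence matrix B: column (u,v) has +1 in row u, -1 in row v.\<close>
definition incid_apply :: "('v \<times> 'v) set \<Rightarrow> ('v \<times> 'v \<Rightarrow> real) \<Rightarrow> 'v \<Rightarrow> real" where
  "incid_apply E f x = (\<Sum>e\<in>E. (if fst e = x then f e else 0) - (if snd e = x then f e else 0))"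

definition trunc_w :: "nat \<Rightarrow> real \<Rightarrow> real" where
  "trunc_w n w = (if w \<ge> real n then w else 0)"

definition phi_of :: "'v set \<Rightarrow> ('v \<times> 'v) set \<Rightarrow> ('v \<Rightarrow> real) \<times> ('v \<Rightarrow> real) \<Rightarrow> 'v \<Rightarrow> real" where
  "phi_of V E w v = (trunc_w (card V) (fst w v) - trunc_w (card V) (snd w v)) / deg E v"

definition flow_of :: "('v \<Rightarrow> real) \<Rightarrow> 'v \<times> 'v \<Rightarrow> real" where
  "flow_of phi e = (if phi (fst e) > phi (snd e) then 1
                    else if phi (fst e) < phi (snd e) then -1 else 0)"

definition r_of :: "('v \<times> 'v) set \<Rightarrow> ('v \<Rightarrow> real) \<Rightarrow> ('v \<Rightarrow> real) \<Rightarrow> 'v \<Rightarrow> real" where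
  "r_of E b phi v = (b v - incid_apply E (flow_of phi) v) / deg E v"

text \<open>sc_w V E b \<alpha> k = the weights w^{k+1} (i.e. sc_w ... 0 = w^1).\<close>
primrec sc_w :: "'v set \<Rightarrow> ('v \<times> 'v) set \<Rightarrow> ('v \<Rightarrow> real) \<Rightarrow> real \<Rightarrow> nat
                  \<Rightarrow> ('v \<Rightarrow> real) \<times> ('v \<Rightarrow> real)" where
  "sc_w V E b \<alpha> 0 = (\<lambda>_. 1, \<lambda>_. 1)"
| "sc_w V E b \<alpha> (Suc k) =
     (let w = sc_w V E b \<alpha> k; r = r_of E b (phi_of V E w) in
      (\<lambda>v. fst w v * (1 + \<alpha> * r v), \<lambda>v. snd w v * (1 - \<alpha> * r v)))"

text \<open>Round-indexed quantities, for rounds i \<ge> 1.\<close>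
definition sc_phi :: "'v set \<Rightarrow> ('v \<times> 'v) set \<Rightarrow> ('v \<Rightarrow> real) \<Rightarrow> real \<Rightarrow> nat \<Rightarrow> 'v \<Rightarrow> real" where
  "sc_phi V E b \<alpha> i = phi_of V E (sc_w V E b \<alpha> (i - 1))"

definition sc_f :: "'v set \<Rightarrow> ('v \<times> 'v) set \<Rightarrow> ('v \<Rightarrow> real) \<Rightarrow> real \<Rightarrow> nat \<Rightarrow> 'v \<times> 'v \<Rightarrow> real" where
  "sc_f V E b \<alpha> i = flow_of (sc_phi V E b \<alpha> i)"

definition sc_r :: "'v set \<Rightarrow> ('v \<times> 'v) set \<Rightarrow> ('v \<Rightarrow> real) \<Rightarrow> real \<Rightarrow> nat \<Rightarrow> 'v \<Rightarrow> real" where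
  "sc_r V E b \<alpha> i = r_of E b (sc_phi V E b \<alpha> i)"

definition sc_terminates :: "'v set \<Rightarrow> ('v \<times> 'v) set \<Rightarrow> ('v \<Rightarrow> real) \<Rightarrow> real \<Rightarrow> nat \<Rightarrow> bool" where
  "sc_terminates V E b \<alpha> i \<longleftrightarrow>
     (\<Sum>v\<in>V. sc_phi V E b \<alpha> i v * b v) >
     (\<Sum>v\<in>V. sc_phi V E b \<alpha> i v * incid_apply E (sc_f V E b \<alpha> i) v)"

end

theory Submission
  imports Defs
begin

text \<open>Let x = r^(\<le>i). By induction w_+ \<le> exp (\<alpha> x) and w_- \<le> exp (-\<alpha> x), so the
  truncated potential of v is nonzero only once exp (\<alpha> |x v|) \<ge> n \<ge> 3 > e, i.e.
  |x v| \<ge> 1/\<alpha> \<ge> 4; since |r v| \<le> 2, after the next round the sign of x v agrees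
  with that of the potential. So there is a sign vector s, monotone in the potential,
  with s v * x v = |x v|. The flow sends every edge downhill, hence \<langle>s, B f\<rangle> \<ge> 0, and the
  degree-weighted l1 norm of x grows per round by at most \<langle>s, b - B f\<rangle> \<le> \<parallel>b\<parallel>_1.\<close>

definition sc_rsum :: "'v set \<Rightarrow> ('v \<times> 'v) set \<Rightarrow> ('v \<Rightarrow> real) \<Rightarrow> real \<Rightarrow> nat \<Rightarrow> 'v \<Rightarrow> real" where
  "sc_rsum V E b \<alpha> k v = (\<Sum>i\<in>{1..k}. sc_r V E b \<alpha> i v)"

lemma sc_rsum_0 [simp]: "sc_rsum V E b \<alpha> 0 v = 0"
  by (simp add: sc_rsum_def)

lemma sc_rsum_Suc: "sc_rsum V E b \<alpha> (Suc k) v = sc_rsum V E b \<alpha> k v + sc_r V E b \<alpha> (Suc k) v"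
  by (simp add: sc_rsum_def)

lemma sc_w_Suc_sc_r:
  "sc_w V E b \<alpha> (Suc k) =
     (\<lambda>v. fst (sc_w V E b \<alpha> k) v * (1 + \<alpha> * sc_r V E b \<alpha> (Suc k) v),
      \<lambda>v. snd (sc_w V E b \<alpha> k) v * (1 - \<alpha> * sc_r V E b \<alpha> (Suc k) v))"
  by (simp add: Let_def sc_r_def sc_phi_def)

lemma abs_incid_apply_le_deg:
  assumes "finite E" "\<forall>e\<in>E. \<bar>f e\<bar> \<le> 1"
  shows "\<bar>incid_apply E f v\<bar> \<le> deg E v"
proof -
  have "\<bar>incid_apply E f v\<bar> \<le> (\<Sum>e\<in>E. \<bar>(if fst e = v then f e else 0) - (if snd e = v then f e else 0)\<bar>)"
    unfolding incid_apply_def by (rule sum_abs)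
  also have "\<dots> \<le> (\<Sum>e\<in>E. if fst e = v \<or> snd e = v then 1 else 0)"
    using assms(2) by (intro sum_mono) (auto simp: abs_le_iff)
  also have "\<dots> = deg E v"
    using assms(1) by (simp add: deg_def sum.inter_filter[symmetric])
  finally show ?thesis .
qed

lemma sum_mult_incid_apply:
  assumes "finite V" "E \<subseteq> V \<times> V"
  shows "(\<Sum>v\<in>V. s v * incid_apply E f v) = (\<Sum>e\<in>E. (s (fst e) - s (snd e)) * f e)"
proof -
  have "(\<Sum>v\<in>V. s v * incid_apply E f v)
      = (\<Sum>e\<in>E. \<Sum>v\<in>V. (if fst e = v then s v * f e else 0) - (if snd e = v then s v * f e else 0))"
    unfolding incid_apply_def sum_distrib_left
    by (subst sum.swap) (intro sum.cong refl, simp add: right_diff_distrib)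
  also have "\<dots> = (\<Sum>e\<in>E. (s (fst e) - s (snd e)) * f e)"
    using assms by (intro sum.cong) (auto simp: sum_subtractf left_diff_distrib)
  finally show ?thesis .
qed

lemma sum_mult_incid_flow_nonneg:
  assumes "finite V" "E \<subseteq> V \<times> V"
    and mono: "\<forall>x\<in>V. \<forall>y\<in>V. phi y < phi x \<longrightarrow> s y \<le> s x"
  shows "0 \<le> (\<Sum>v\<in>V. s v * incid_apply E (flow_of phi) v)"
  unfolding sum_mult_incid_apply[OF assms(1,2)]
proof (rule sum_nonneg)
  fix e assume "e \<in> E"
  then have "fst e \<in> V" "snd e \<in> V" using assms(2) by auto
  then show "0 \<le> (s (fst e) - s (snd e)) * flow_of phi e"
    using mono by (auto simp: flow_of_def)
qed

lemma abs_r_of_le_2: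
  assumes "finite E" "0 < deg E v" "\<bar>b v\<bar> \<le> deg E v"
  shows "\<bar>r_of E b phi v\<bar> \<le> 2"
proof -
  have "\<bar>incid_apply E (flow_of phi) v\<bar> \<le> deg E v"
    using assms(1) by (rule abs_incid_apply_le_deg) (simp add: flow_of_def)
  then have "\<bar>b v - incid_apply E (flow_of phi) v\<bar> \<le> 2 * deg E v"
    using assms(3) by linarith
  then show ?thesis
    using assms(2) by (simp add: r_of_def abs_divide pos_divide_le_eq)
qed

lemma sum_abs_step_le:
  assumes "finite V" "E \<subseteq> V \<times> V" "\<forall>v\<in>V. 0 < deg E v"
    and Y: "\<forall>v\<in>V. Y v = X v + (b v - incid_apply E (flow_of phi) v) / deg E v"
    and sign: "\<forall>v\<in>V. (0 < phi v \<longrightarrow> 0 \<le> Y v) \<and> (phi v < 0 \<longrightarrow> Y v \<le> 0)"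
  shows "(\<Sum>v\<in>V. \<bar>Y v\<bar> * deg E v) \<le> (\<Sum>v\<in>V. \<bar>X v\<bar> * deg E v) + (\<Sum>v\<in>V. \<bar>b v\<bar>)"
proof -
  define s where "s v = (if 0 < phi v then 1 else if phi v < 0 then -1 else sgn (Y v))" for v
  have sY: "s v * Y v = \<bar>Y v\<bar>" if "v \<in> V" for v
    using sign that by (auto simp: s_def sgn_if)
  have s_le: "\<bar>s v\<bar> \<le> 1" for v
    by (simp add: s_def sgn_if)
  have s_mult_le: "s v * z \<le> \<bar>z\<bar>" for v z
  proof -
    have "s v * z \<le> \<bar>s v\<bar> * \<bar>z\<bar>" by (metis abs_ge_self abs_mult)
    also have "\<dots> \<le> \<bar>z\<bar>" using s_le[of v] by (simp add: mult_left_le_one_le)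
    finally show ?thesis .
  qed
  have per_vertex:
    "\<bar>Y v\<bar> * deg E v - \<bar>X v\<bar> * deg E v \<le> s v * b v - s v * incid_apply E (flow_of phi) v"
    if "v \<in> V" for v
  proof -
    have "(\<bar>Y v\<bar> - \<bar>X v\<bar>) * deg E v \<le> s v * (Y v - X v) * deg E v"
      using sY[OF that] s_mult_le[of v "X v"] assms(3) that
      by (intro mult_right_mono) (auto simp: right_diff_distrib)
    also have "\<dots> = s v * (b v - incid_apply E (flow_of phi) v)"
      using Y that less_imp_neq[OF assms(3)[rule_format, OF that]] by (simp add: field_simps)
    finally show ?thesis by (simp add: algebra_simps)
  qed
  have flow: "0 \<le> (\<Sum>v\<in>V. s v * incid_apply E (flow_of phi) v)"
    using assms(1,2) by (rule sum_mult_incid_flow_nonneg) (auto simp: s_def sgn_if)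
  have "(\<Sum>v\<in>V. \<bar>Y v\<bar> * deg E v) - (\<Sum>v\<in>V. \<bar>X v\<bar> * deg E v)
      \<le> (\<Sum>v\<in>V. s v * b v) - (\<Sum>v\<in>V. s v * incid_apply E (flow_of phi) v)"
    unfolding sum_subtractf[symmetric] by (rule sum_mono) (rule per_vertex)
  also have "\<dots> \<le> (\<Sum>v\<in>V. \<bar>b v\<bar>)"
    using flow sum_mono[of V "\<lambda>v. s v * b v" "\<lambda>v. \<bar>b v\<bar>", OF s_mult_le] by linarith
  finally show ?thesis by linarith
qed

lemma sc_w_le_exp:
  assumes "\<forall>i. \<bar>\<alpha> * sc_r V E b \<alpha> i v\<bar> \<le> 1"
  shows "0 \<le> fst (sc_w V E b \<alpha> k) v \<and> fst (sc_w V E b \<alpha> k) v \<le> exp (\<alpha> * sc_rsum V E b \<alpha> k v)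
       \<and> 0 \<le> snd (sc_w V E b \<alpha> k) v \<and> snd (sc_w V E b \<alpha> k) v \<le> exp (- \<alpha> * sc_rsum V E b \<alpha> k v)"
proof (induction k)
  case 0
  then show ?case by simp
next
  case (Suc k)
  let ?r = "sc_r V E b \<alpha> (Suc k) v" and ?x = "sc_rsum V E b \<alpha> k v"
  have "0 \<le> 1 + \<alpha> * ?r" "0 \<le> 1 - \<alpha> * ?r"
    using assms[rule_format, of "Suc k"] by (auto simp: abs_le_iff)
  moreover have "1 + \<alpha> * ?r \<le> exp (\<alpha> * ?r)" "1 - \<alpha> * ?r \<le> exp (- \<alpha> * ?r)"
    using exp_ge_add_one_self[of "\<alpha> * ?r"] exp_ge_add_one_self[of "- \<alpha> * ?r"] by simp_all
  moreover have "exp (\<alpha> * (?x + ?r)) = exp (\<alpha> * ?x) * exp (\<alpha> * ?r)"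
    "exp (- \<alpha> * (?x + ?r)) = exp (- \<alpha> * ?x) * exp (- \<alpha> * ?r)"
    by (simp_all add: exp_add[symmetric] algebra_simps)
  ultimately show ?case
    using Suc.IH unfolding sc_w_Suc_sc_r sc_rsum_Suc fst_conv snd_conv by (auto intro: mult_mono)
qed

lemma four_le_of_three_le_exp:
  fixes \<alpha> x w :: real
  assumes "0 < \<alpha>" "\<alpha> \<le> 1/4" "3 \<le> w" "w \<le> exp (\<alpha> * x)"
  shows "4 \<le> x"
proof -
  have "exp 1 \<le> exp (\<alpha> * x)"
    using exp_le assms(3,4) by linarith
  then have "1 \<le> \<alpha> * x" by simp
  then have "0 < x" using assms(1) by (smt (verit) zero_less_mult_iff)
  then have "4 * (\<alpha> * x) \<le> x" using assms(2) by (simp add: mult_left_le_one_le)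
  then show ?thesis using \<open>1 \<le> \<alpha> * x\<close> by linarith
qed

lemma sc_phi_sign:
  assumes "finite E" "3 \<le> card V" "0 < deg E v" "\<bar>b v\<bar> \<le> deg E v" "0 < \<alpha>" "\<alpha> \<le> 1/4"
  shows "(0 < sc_phi V E b \<alpha> (Suc k) v \<longrightarrow> 0 \<le> sc_rsum V E b \<alpha> (Suc k) v) \<and>
         (sc_phi V E b \<alpha> (Suc k) v < 0 \<longrightarrow> sc_rsum V E b \<alpha> (Suc k) v \<le> 0)"
proof -
  let ?f = "fst (sc_w V E b \<alpha> k) v" and ?s = "snd (sc_w V E b \<alpha> k) v"
  let ?x = "sc_rsum V E b \<alpha> k v" and ?n = "real (card V)"
  have r_le: "\<bar>sc_r V E b \<alpha> i v\<bar> \<le> 2" for i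
    unfolding sc_r_def using assms(1,3,4) by (rule abs_r_of_le_2)
  have "\<bar>\<alpha> * sc_r V E b \<alpha> i v\<bar> \<le> 1" for i
    using mult_mono[OF _ r_le, of \<alpha> "1/2" i] assms(5,6) by (simp add: abs_mult)
  then have w: "0 \<le> ?f" "?f \<le> exp (\<alpha> * ?x)" "0 \<le> ?s" "?s \<le> exp (\<alpha> * - ?x)"
    using sc_w_le_exp[of \<alpha> V E b v k] by auto
  have "3 \<le> ?n" using assms(2) by simp
  have phi: "sc_phi V E b \<alpha> (Suc k) v = (trunc_w (card V) ?f - trunc_w (card V) ?s) / deg E v"
    by (simp add: sc_phi_def phi_of_def)
  show ?thesis
  proof (intro conjI impI)
    assume "0 < sc_phi V E b \<alpha> (Suc k) v"
    then have "?n \<le> ?f"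
      using phi assms(3) w(3) by (auto simp: zero_less_divide_iff trunc_w_def split: if_splits)
    then have "4 \<le> ?x"
      using four_le_of_three_le_exp[OF assms(5,6) _ w(2)] \<open>3 \<le> ?n\<close> by linarith
    then show "0 \<le> sc_rsum V E b \<alpha> (Suc k) v"
      using r_le[of "Suc k"] by (simp add: sc_rsum_Suc)
  next
    assume "sc_phi V E b \<alpha> (Suc k) v < 0"
    then have "?n \<le> ?s"
      using phi assms(3) w(1) by (auto simp: divide_less_0_iff trunc_w_def split: if_splits)
    then have "4 \<le> - ?x"
      using four_le_of_three_le_exp[OF assms(5,6) _ w(4)] \<open>3 \<le> ?n\<close> by linarith
    then show "sc_rsum V E b \<alpha> (Suc k) v \<le> 0"
      using r_le[of "Suc k"] by (simp add: sc_rsum_Suc)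
  qed
qed

lemma sc_rsum_Suc_le:
  assumes finV: "finite V" and n3: "3 \<le> card V" and EV: "E \<subseteq> V \<times> V"
    and degpos: "\<forall>v\<in>V. 1 \<le> deg E v" and bbound: "\<forall>v\<in>V. \<bar>b v\<bar> \<le> deg E v"
    and alpha: "0 < \<alpha>" "\<alpha> \<le> 1/4"
  shows "(\<Sum>v\<in>V. \<bar>sc_rsum V E b \<alpha> (Suc k) v\<bar> * deg E v)
        \<le> (\<Sum>v\<in>V. \<bar>sc_rsum V E b \<alpha> k v\<bar> * deg E v) + (\<Sum>v\<in>V. \<bar>b v\<bar>)"
proof (rule sum_abs_step_le[OF finV EV, where phi = "sc_phi V E b \<alpha> (Suc k)"])
  have "finite E" using finite_subset[OF EV] finV by blast
  then show "\<forall>v\<in>V. (0 < sc_phi V E b \<alpha> (Suc k) v \<longrightarrow> 0 \<le> sc_rsum V E b \<alpha> (Suc k) v) \<and>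
                    (sc_phi V E b \<alpha> (Suc k) v < 0 \<longrightarrow> sc_rsum V E b \<alpha> (Suc k) v \<le> 0)"
    using sc_phi_sign n3 degpos bbound alpha by fastforce
qed (use degpos in \<open>auto simp: sc_rsum_Suc sc_r_def r_of_def\<close>)

theorem lemma2p8:
  fixes V :: "'v set" and E :: "('v \<times> 'v) set" and b :: "'v \<Rightarrow> real"
    and \<alpha> :: real and T i :: nat
  assumes finV: "finite V"
    and n3: "card V \<ge> 3"
    and EV: "E \<subseteq> V \<times> V"
    and noloop: "\<forall>e\<in>E. fst e \<noteq> snd e"
    and orient: "\<forall>u v. (u, v) \<in> E \<longrightarrow> (v, u) \<notin> E"
    and degpos: "\<forall>v\<in>V. deg E v \<ge> 1"
    and bbound: "\<forall>v\<in>V. \<bar>b v\<bar> \<le> deg E v"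
    and alpha: "0 < \<alpha>" "\<alpha> \<le> 1/4"
    and T: "T \<ge> 1"
    and iT: "i \<le> T"
    and ran: "\<forall>i'\<in>{1..i}. \<not> sc_terminates V E b \<alpha> i'"
  shows "(\<Sum>v\<in>V. \<bar>\<Sum>i'\<in>{1..i}. sc_r V E b \<alpha> i' v\<bar> * deg E v)
           \<le> real i * (\<Sum>v\<in>V. \<bar>b v\<bar>)"
proof -
  have "(\<Sum>v\<in>V. \<bar>sc_rsum V E b \<alpha> k v\<bar> * deg E v) \<le> real k * (\<Sum>v\<in>V. \<bar>b v\<bar>)" for k
  proof (induction k)
    case (Suc k)
    then show ?case
      using sc_rsum_Suc_le[OF finV n3 EV degpos bbound alpha, of k] by (simp add: distrib_right)
  qed simp
  then show ?thesis by (simp add: sc_rsum_def)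
qed

end
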